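(* Let $u,v:\mathbb{C}\to\mathbb{R}$ be harmonic functions, $f=u+iv$, $\mathcal{R}_f=f(\mathbb{C})$. Suppose that for some $\alpha\in\mathbb{R}$, $$\mathcal{D}(\mathcal{R}_f)\subset\{e^{i\theta}:\ \alpha-\pi/2\le\theta\le\alpha+\pi/2\}.$$ Then there exists $c\in\mathbb{R}$ such that $(\cos\alpha)u+(\sin\alpha)v=c$ on $\mathbb{C}$. In particular $\mathcal{R}_f$ is a line or a point.
   Context: $\partial\mathbb{D}$ is the unit circle. For a set $\mathcal{R}\subset\mathbb{C}$, a point $e^{i\theta}\in\partial\mathbb{D}$ is an asymptotic direction of $\mathcal{R}$ if there exist points $w_n\in\mathcal{R}$ and positive numbers $\varepsilon_n\to 0$ with $\varepsilon_n w_n\to e^{i\theta}$; $\mathcal{D}(\mathcal{R})$ denotes the set of asymptotic directions of $\mathcal{R}$. *)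

theory Defs
  imports "HOL-Analysis.Analysis"
begin

definition has_partials :: "(complex \<Rightarrow> real) \<Rightarrow> (complex \<Rightarrow> real) \<Rightarrow> (complex \<Rightarrow> real) \<Rightarrow> bool" where
  "has_partials u ux uy \<longleftrightarrow>
     (\<forall>z. (u has_derivative (\<lambda>h. ux z * Re h + uy z * Im h)) (at z))"

definition harmonic :: "(complex \<Rightarrow> real) \<Rightarrow> bool" where
  "harmonic u \<longleftrightarrow>
     (\<exists>ux uy uxx uxy uyx uyy.
        has_partials u ux uy \<and> has_partials ux uxx uxy \<and> has_partials uy uyx uyy \<and>
        continuous_on UNIV uxx \<and> continuous_on UNIV uxy \<and>
        continuous_on UNIV uyx \<and> continuous_on UNIV uyy \<and>
        (\<forall>z. uxx z + uyy z = 0))"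

definition asym_dirs :: "complex set \<Rightarrow> complex set" where
  "asym_dirs R = {\<zeta>. norm \<zeta> = 1 \<and>
     (\<exists>w \<epsilon>. (\<forall>n. w n \<in> R \<and> \<epsilon> n > (0::real)) \<and> \<epsilon> \<longlonglongrightarrow> 0 \<and>
             (\<lambda>n. complex_of_real (\<epsilon> n) * w n) \<longlonglongrightarrow> \<zeta>)}"

end

(*
  Write u = Re F and v = Re G with F, G entire and rotate by alpha: for
  P = cos alpha F + sin alpha G and Q = - sin alpha F + cos alpha G we get
  f z * cis (- alpha) = Re (P z) + i Re (Q z). The condition on asymptotic directions
  says that Re P >= - eps |Re Q| - C_eps for every eps > 0. If Re Q is not constant it
  takes negative values, and a Phragmen-Lindelof argument on the region {Re Q >= 0}
  shows that Re P is bounded below there; by symmetry the same holds on {Re Q <= 0}.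
  So Re P is bounded below on the whole plane and hence constant (Liouville for
  exp (- P)). Finally Re Q is either constant or takes every real value, so f(C) is a
  point or a line.
*)
theory Submission
  imports Defs "HOL-Complex_Analysis.Complex_Analysis"
begin

section \<open>Harmonic functions are real parts of entire functions\<close>

lemma has_partials_DERIV_along_line:
  assumes "has_partials u ux uy"
  shows "((\<lambda>t. u (z + of_real t * d)) has_real_derivative
            ux (z + of_real t * d) * Re d + uy (z + of_real t * d) * Im d) (at t)"
proof -
  have "(u has_derivative (\<lambda>h. ux (z + of_real t * d) * Re h + uy (z + of_real t * d) * Im h))
          (at (z + of_real t * d))"
    using assms unfolding has_partials_def by blast
  moreover have "((\<lambda>t. z + of_real t * d) has_derivative (\<lambda>s. of_real s * d)) (at t)"
    by (auto intro!: derivative_eq_intros)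
  ultimately have "((\<lambda>t. u (z + of_real t * d)) has_derivative
          (\<lambda>s. ux (z + of_real t * d) * Re (of_real s * d) + uy (z + of_real t * d) * Im (of_real s * d))) (at t)"
    using has_derivative_compose by blast
  then show ?thesis
    unfolding has_field_derivative_def
    by (rule has_derivative_eq_rhs) (simp add: fun_eq_iff distrib_left mult.commute mult.left_commute)
qed

lemma has_partials_DERIV_horizontal:
  "has_partials u ux uy \<Longrightarrow>
     ((\<lambda>t. u (z + of_real t)) has_real_derivative ux (z + of_real t)) (at t)"
  using has_partials_DERIV_along_line[where d=1] by simp

lemma has_partials_DERIV_vertical:
  "has_partials u ux uy \<Longrightarrow>
     ((\<lambda>t. u (z + \<i> * of_real t)) has_real_derivative uy (z + \<i> * of_real t)) (at t)"
  using has_partials_DERIV_along_line[where d=\<i>] by (simp add: mult.commute)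

definition square_difference :: "(complex \<Rightarrow> real) \<Rightarrow> complex \<Rightarrow> real \<Rightarrow> real" where
  "square_difference u z h = u (z + Complex h h) - u (z + of_real h) - u (z + \<i> * of_real h) + u z"

lemma square_difference_mean_value_xy:
  assumes u: "has_partials u ux uy" and ux: "has_partials ux uxx uxy" and "0 < h"
  obtains a b where "0 < a" "a < h" "0 < b" "b < h"
    "square_difference u z h = h * h * uxy (z + Complex a b)"
proof -
  obtain a where a: "0 < a" "a < h" and eq_a:
    "u (z + \<i> * of_real h + of_real h) - u (z + of_real h)
       - (u (z + \<i> * of_real h + of_real 0) - u (z + of_real 0))
      = (h - 0) * (ux (z + \<i> * of_real h + of_real a) - ux (z + of_real a))"
    using MVT2[OF \<open>0 < h\<close>
        DERIV_diff[OF has_partials_DERIV_horizontal[OF u] has_partials_DERIV_horizontal[OF u]]]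
    by blast
  obtain b where b: "0 < b" "b < h" and eq_b:
    "ux (z + of_real a + \<i> * of_real h) - ux (z + of_real a + \<i> * of_real 0)
      = (h - 0) * uxy (z + of_real a + \<i> * of_real b)"
    using MVT2[OF \<open>0 < h\<close> has_partials_DERIV_vertical[OF ux]] by blast
  have "z + \<i> * of_real h + of_real h = z + Complex h h" "z + of_real a + \<i> * of_real b = z + Complex a b"
    by (simp_all add: complex_eq_iff)
  with eq_a eq_b have "square_difference u z h = h * h * uxy (z + Complex a b)"
    by (simp add: square_difference_def algebra_simps)
  with a b that show ?thesis by blast
qed

lemma square_difference_mean_value_yx:
  assumes u: "has_partials u ux uy" and uy: "has_partials uy uyx uyy" and "0 < h"
  obtains a b where "0 < a" "a < h" "0 < b" "b < h"
    "square_difference u z h = h * h * uyx (z + Complex a b)"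
proof -
  obtain b where b: "0 < b" "b < h" and eq_b:
    "u (z + of_real h + \<i> * of_real h) - u (z + \<i> * of_real h)
       - (u (z + of_real h + \<i> * of_real 0) - u (z + \<i> * of_real 0))
      = (h - 0) * (uy (z + of_real h + \<i> * of_real b) - uy (z + \<i> * of_real b))"
    using MVT2[OF \<open>0 < h\<close>
        DERIV_diff[OF has_partials_DERIV_vertical[OF u] has_partials_DERIV_vertical[OF u]]]
    by blast
  obtain a where a: "0 < a" "a < h" and eq_a:
    "uy (z + \<i> * of_real b + of_real h) - uy (z + \<i> * of_real b + of_real 0)
      = (h - 0) * uyx (z + \<i> * of_real b + of_real a)"
    using MVT2[OF \<open>0 < h\<close> has_partials_DERIV_horizontal[OF uy]] by blast
  have "z + of_real h + \<i> * of_real h = z + Complex h h" "z + \<i> * of_real b + of_real a = z + Complex a b"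
    by (simp_all add: complex_eq_iff)
  with eq_a eq_b have "square_difference u z h = h * h * uyx (z + Complex a b)"
    by (simp add: square_difference_def algebra_simps)
  with a b that show ?thesis by blast
qed

text \<open>Schwarz's theorem: both mixed partials are limits of square_difference u z h / h^2.\<close>
lemma has_partials_mixed_eq:
  assumes u: "has_partials u ux uy" and ux: "has_partials ux uxx uxy" and uy: "has_partials uy uyx uyy"
    and cont_xy: "isCont uxy z" and cont_yx: "isCont uyx z"
  shows "uxy z = uyx z"
proof (rule eq_iff_diff_eq_0[THEN iffD2], rule dense_eq0_I)
  fix e :: real assume "0 < e"
  then have "0 < e / 2" by simp
  then obtain \<delta>1 \<delta>2 where "0 < \<delta>1" "0 < \<delta>2"
    and \<delta>1: "\<forall>w. dist w z < \<delta>1 \<longrightarrow> dist (uxy w) (uxy z) < e / 2"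
    and \<delta>2: "\<forall>w. dist w z < \<delta>2 \<longrightarrow> dist (uyx w) (uyx z) < e / 2"
    using cont_xy cont_yx unfolding continuous_at_eps_delta by blast
  define h where "h = min \<delta>1 \<delta>2 / 2"
  have "0 < h" using \<open>0 < \<delta>1\<close> \<open>0 < \<delta>2\<close> by (simp add: h_def)
  have near: "dist (z + Complex a b) z < min \<delta>1 \<delta>2" if "0 < a" "a < h" "0 < b" "b < h" for a b
    using cmod_le[of "Complex a b"] that by (simp add: dist_norm h_def)
  obtain a b where ab: "0 < a" "a < h" "0 < b" "b < h"
    and xy: "square_difference u z h = h * h * uxy (z + Complex a b)"
    using square_difference_mean_value_xy[OF u ux \<open>0 < h\<close>] .
  obtain a' b' where ab': "0 < a'" "a' < h" "0 < b'" "b' < h"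
    and yx: "square_difference u z h = h * h * uyx (z + Complex a' b')"
    using square_difference_mean_value_yx[OF u uy \<open>0 < h\<close>] .
  have "uxy (z + Complex a b) = uyx (z + Complex a' b')"
    using xy yx \<open>0 < h\<close> by simp
  moreover have "dist (uxy (z + Complex a b)) (uxy z) < e / 2"
    using \<delta>1 near[OF ab] by simp
  moreover have "dist (uyx (z + Complex a' b')) (uyx z) < e / 2"
    using \<delta>2 near[OF ab'] by simp
  ultimately show "\<bar>uxy z - uyx z\<bar> \<le> e"
    unfolding dist_real_def by linarith
qed

lemma has_partials_uminus:
  "has_partials u ux uy \<Longrightarrow> has_partials (\<lambda>z. - u z) (\<lambda>z. - ux z) (\<lambda>z. - uy z)"
  unfolding has_partials_def
proof (intro allI)
  fix z
  assume "\<forall>z. (u has_derivative (\<lambda>h. ux z * Re h + uy z * Im h)) (at z)"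
  from this[rule_format, of z] have "((\<lambda>z. - u z) has_derivative (\<lambda>h. - (ux z * Re h + uy z * Im h))) (at z)"
    by (rule has_derivative_minus)
  then show "((\<lambda>z. - u z) has_derivative (\<lambda>h. - ux z * Re h + - uy z * Im h)) (at z)"
    by (rule has_derivative_eq_rhs) (simp add: fun_eq_iff)
qed

lemma Cauchy_Riemann_has_field_derivative:
  assumes p: "has_partials p px py" and q: "has_partials q qx qy"
    and "px z = qy z" and "py z = - qx z"
  shows "((\<lambda>z. Complex (p z) (q z)) has_field_derivative Complex (px z) (qx z)) (at z)"
proof -
  have "((\<lambda>z. of_real (p z) + \<i> * of_real (q z)) has_derivative
          (\<lambda>h. of_real (px z * Re h + py z * Im h) + \<i> * of_real (qx z * Re h + qy z * Im h))) (at z)"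
    using p q unfolding has_partials_def by (intro derivative_intros) auto
  then show ?thesis
    unfolding has_field_derivative_def Complex_eq[symmetric]
    by (rule has_derivative_eq_rhs) (simp add: fun_eq_iff complex_eq_iff assms algebra_simps)
qed

lemma has_field_derivative_imp_has_partials_Re:
  assumes "\<And>z. (F has_field_derivative g z) (at z)"
  shows "has_partials (\<lambda>z. Re (F z)) (\<lambda>z. Re (g z)) (\<lambda>z. - Im (g z))"
  unfolding has_partials_def
proof
  fix z
  show "((\<lambda>z. Re (F z)) has_derivative (\<lambda>h. Re (g z) * Re h + - Im (g z) * Im h)) (at z)"
    using has_derivative_Re[OF assms[of z, unfolded has_field_derivative_def]]
    by (rule has_derivative_eq_rhs) (simp add: fun_eq_iff)
qed

lemma has_partials_unique_up_to_constant:
  assumes "has_partials u ux uy" and "has_partials v ux uy"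
  obtains c where "\<And>z. u z = v z + c"
proof -
  have "((\<lambda>z. u z - v z) has_derivative (\<lambda>h. 0)) (at z within UNIV)" for z
    using has_derivative_diff assms unfolding has_partials_def by fastforce
  then obtain c where "\<forall>z\<in>UNIV. u z - v z = c"
    using has_derivative_zero_constant[OF convex_UNIV] by blast
  then show thesis using that by (metis UNIV_I diff_add_cancel add.commute)
qed

lemma harmonic_imp_Re_of_entire:
  assumes "harmonic u"
  obtains F where "F holomorphic_on UNIV" "\<And>z. Re (F z) = u z"
proof -
  obtain ux uy uxx uxy uyx uyy where u: "has_partials u ux uy" and ux: "has_partials ux uxx uxy"
    and uy: "has_partials uy uyx uyy" and cont: "continuous_on UNIV uxy" "continuous_on UNIV uyx"
    and laplace: "\<And>z. uxx z + uyy z = 0"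
    using assms unfolding harmonic_def by blast
  have "uxy z = uyx z" for z
    using has_partials_mixed_eq[OF u ux uy] cont by (simp add: continuous_on_eq_continuous_at)
  then have "((\<lambda>z. Complex (ux z) (- uy z)) has_field_derivative Complex (uxx z) (- uyx z)) (at z)" for z
    using Cauchy_Riemann_has_field_derivative[OF ux has_partials_uminus[OF uy]] laplace[of z]
    by (simp add: eq_neg_iff_add_eq_0)
  then have "(\<lambda>z. Complex (ux z) (- uy z)) holomorphic_on UNIV"
    by (auto simp: holomorphic_on_open)
  then obtain F0 where F0: "\<And>z. (F0 has_field_derivative Complex (ux z) (- uy z)) (at z)"
    using holomorphic_convex_primitive'[of UNIV] by auto
  obtain c where c: "\<And>z. u z = Re (F0 z) + c"
    using has_partials_unique_up_to_constant[OF u] has_field_derivative_imp_has_partials_Re[OF F0] by auto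
  have "F0 holomorphic_on UNIV"
    using F0 by (auto simp: holomorphic_on_open)
  then show thesis
    using that[of "\<lambda>z. F0 z + of_real c"] by (simp add: c holomorphic_intros)
qed

lemma harmonic_pair_rotation_Re_of_entire:
  assumes "harmonic u" and "harmonic v"
  obtains P Q where "P holomorphic_on UNIV" "Q holomorphic_on UNIV"
    "\<And>z. Complex (u z) (v z) * cis (- \<alpha>) = Complex (Re (P z)) (Re (Q z))"
proof -
  obtain F G where F: "F holomorphic_on UNIV" "\<And>z. Re (F z) = u z"
    and G: "G holomorphic_on UNIV" "\<And>z. Re (G z) = v z"
    using harmonic_imp_Re_of_entire assms by metis
  show thesis
  proof
    show "(\<lambda>z. of_real (cos \<alpha>) * F z + of_real (sin \<alpha>) * G z) holomorphic_on UNIV"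
      and "(\<lambda>z. of_real (- sin \<alpha>) * F z + of_real (cos \<alpha>) * G z) holomorphic_on UNIV"
      using F G by (auto intro!: holomorphic_intros)
  qed (simp add: F G complex_eq_iff algebra_simps)
qed

section \<open>Real parts of entire functions\<close>

lemma entire_Re_bounded_below_imp_constant:
  assumes F: "F holomorphic_on UNIV" and B: "\<And>z. B \<le> Re (F z)"
  shows "Re (F z) = Re (F w)"
proof -
  have "bounded (range (\<lambda>z. exp (- F z)))"
    unfolding bounded_iff using B by (auto simp: norm_exp_eq_Re intro!: exI[of _ "exp (- B)"])
  moreover have "(\<lambda>z. exp (- F z)) holomorphic_on UNIV"
    using F by (intro holomorphic_intros)
  ultimately have "(\<lambda>z. exp (- F z)) constant_on UNIV"
    using Liouville_theorem by blast
  then obtain c where "\<And>z. exp (- F z) = c"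
    unfolding constant_on_def by blast
  then have "norm (exp (- F z)) = norm (exp (- F w))"
    by simp
  then show ?thesis by (simp add: norm_exp_eq_Re)
qed

lemma entire_Re_bounded_above_imp_constant:
  assumes F: "F holomorphic_on UNIV" and B: "\<And>z. Re (F z) \<le> B"
  shows "Re (F z) = Re (F w)"
  using entire_Re_bounded_below_imp_constant[of "\<lambda>z. - F z" "- B"] F B
  by (auto intro: holomorphic_intros)

lemma entire_Re_range:
  assumes F: "F holomorphic_on UNIV"
  shows "(\<exists>a. range (\<lambda>z. Re (F z)) = {a}) \<or> range (\<lambda>z. Re (F z)) = UNIV"
proof (cases "\<forall>z. Re (F z) = Re (F 0)")
  case True
  then show ?thesis by auto
next
  case False
  have "t \<in> range (\<lambda>z. Re (F z))" for t
  proof -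
    obtain z1 where z1: "Re (F z1) < t"
      using False entire_Re_bounded_below_imp_constant[OF F, of t] by (meson not_less)
    obtain z2 where z2: "t < Re (F z2)"
      using False entire_Re_bounded_above_imp_constant[OF F, of t] by (meson not_less)
    have "connected (range (\<lambda>z. Re (F z)))"
      using holomorphic_on_imp_continuous_on[OF F]
      by (intro connected_continuous_image connected_UNIV continuous_intros)
    then show ?thesis
      using connectedD_interval[OF _ rangeI[of _ z1] rangeI[of _ z2], of _ t] z1 z2 by simp
  qed
  then show ?thesis by auto
qed

lemma range_rotated_point_or_line:
  fixes f :: "'a \<Rightarrow> complex" and q :: "'a \<Rightarrow> real"
  assumes rotated: "\<And>z. f z * cis (- \<alpha>) = Complex c (q z)"
    and q: "(\<exists>a. range q = {a}) \<or> range q = UNIV"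
  shows "(\<exists>p. range f = {p}) \<or> (\<exists>p d. d \<noteq> 0 \<and> range f = {p + complex_of_real t * d | t. True})"
proof -
  have "f z = Complex c (q z) * cis \<alpha>" for z
    using arg_cong[OF rotated[of z], of "\<lambda>x. x * cis \<alpha>"] by (simp add: mult.assoc cis_mult)
  then have "f z = cis \<alpha> * of_real c + of_real (q z) * (cis \<alpha> * \<i>)" for z
    by (simp add: Complex_eq ring_distribs mult_ac)
  then have image: "range f = (\<lambda>t. cis \<alpha> * of_real c + of_real t * (cis \<alpha> * \<i>)) ` range q"
    by (auto simp: image_image)
  from q show ?thesis
  proof
    assume "\<exists>a. range q = {a}"
    then show ?thesis
      unfolding image by auto
  next
    assume "range q = UNIV"
    then have "range f = {cis \<alpha> * of_real c + complex_of_real t * (cis \<alpha> * \<i>) | t. True}"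
      unfolding image by auto
    moreover have "cis \<alpha> * \<i> \<noteq> 0"
      by simp
    ultimately show ?thesis
      by blast
  qed
qed

section \<open>A Phragmen-Lindelof principle\<close>

lemma maximum_modulus_superlevel_set:
  fixes g :: "complex \<Rightarrow> real"
  assumes g: "continuous_on UNIV g" and \<Psi>: "\<Psi> holomorphic_on {w. 0 \<le> g w}"
    and boundary: "\<And>w. g w = 0 \<Longrightarrow> norm (\<Psi> w) \<le> B"
    and far: "\<And>w. 0 \<le> g w \<Longrightarrow> R \<le> norm w \<Longrightarrow> norm (\<Psi> w) \<le> B"
    and z: "0 \<le> g z"
  shows "norm (\<Psi> z) \<le> B"
proof (cases "g z = 0 \<or> R \<le> norm z")
  case True
  then show ?thesis using boundary far z by blast
next
  case False
  define S where "S = {w. 0 < g w} \<inter> ball 0 R"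
  have "open S"
    unfolding S_def by (intro open_Int open_ball open_Collect_less continuous_on_const g)
  have "closed ({w. 0 \<le> g w} \<inter> cball 0 R)"
    by (intro closed_Int closed_cball closed_Collect_le continuous_on_const g)
  then have closure_S: "closure S \<subseteq> {w. 0 \<le> g w} \<inter> cball 0 R"
    by (rule closure_minimal[rotated]) (auto simp: S_def)
  show ?thesis
  proof (rule maximum_modulus_frontier[of \<Psi> S])
    show "\<Psi> holomorphic_on interior S"
      by (rule holomorphic_on_subset[OF \<Psi>]) (use interior_subset[of S] in \<open>auto simp: S_def\<close>)
    show "continuous_on (closure S) \<Psi>"
      by (rule continuous_on_subset[OF holomorphic_on_imp_continuous_on[OF \<Psi>]]) (use closure_S in blast)
    show "bounded S"
      unfolding S_def by (meson bounded_Int bounded_ball)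
    show "z \<in> S"
      using False z by (simp add: S_def)
  next
    fix w assume "w \<in> frontier S"
    then have "w \<in> closure S" "w \<notin> S"
      using \<open>open S\<close> by (auto simp: frontier_def interior_open)
    then show "norm (\<Psi> w) \<le> B"
      using closure_S boundary far by (force simp: S_def)
  qed
qed

lemma norm_log_barrier_le_1_iff:
  fixes h w z0 :: complex
  assumes "0 < r" and "r \<le> norm (w - z0)"
  shows "norm (exp (- (of_real k * h)) * (of_real r / (w - z0))) \<le> 1 \<longleftrightarrow>
         - (k * Re h) \<le> ln (norm (w - z0) / r)"
proof -
  have "0 < norm (w - z0)"
    using assms by linarith
  then have "0 < norm (w - z0) / r"
    using assms by simp
  then have "- (k * Re h) \<le> ln (norm (w - z0) / r) \<longleftrightarrow> exp (- (k * Re h)) * r \<le> norm (w - z0)"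
    using \<open>0 < r\<close> by (simp add: ln_ge_iff pos_le_divide_eq)
  also have "\<dots> \<longleftrightarrow> exp (- (k * Re h)) * (r / norm (w - z0)) \<le> 1"
    using \<open>0 < norm (w - z0)\<close> by (simp add: pos_divide_le_eq)
  finally show ?thesis
    using \<open>0 < r\<close> by (simp add: norm_mult norm_divide norm_exp_eq_Re)
qed

text \<open>The factor r / (w - z0) of the barrier decays at infinity; this is what makes the
  maximum principle applicable on the unbounded region {g \<ge> 0}.\<close>
lemma Re_log_barrier_bound:
  fixes H :: "complex \<Rightarrow> complex" and g :: "complex \<Rightarrow> real"
  assumes H: "H holomorphic_on UNIV" and g: "continuous_on UNIV g" and "0 < r"
    and outside: "\<And>w. 0 \<le> g w \<Longrightarrow> r \<le> norm (w - z0)"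
    and boundary: "\<And>w. g w = 0 \<Longrightarrow> 0 \<le> Re (H w)"
    and below: "\<And>w. 0 \<le> g w \<Longrightarrow> - M \<le> Re (H w)"
    and "0 < k" and z: "0 \<le> g z"
  shows "- (k * Re (H z)) \<le> ln (norm (z - z0) / r)"
proof -
  define \<Psi> where "\<Psi> w = exp (- (of_real k * H w)) * (of_real r / (w - z0))" for w
  have "z0 \<notin> {w. 0 \<le> g w}"
    using outside[of z0] \<open>0 < r\<close> by auto
  then have "\<Psi> holomorphic_on {w. 0 \<le> g w}"
    unfolding \<Psi>_def by (intro holomorphic_intros holomorphic_on_subset[OF H]) auto
  moreover have "norm (\<Psi> w) \<le> 1" if "g w = 0" for w
  proof -
    have "- (k * Re (H w)) \<le> 0"
      using boundary[OF that] \<open>0 < k\<close> by simp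
    also have "0 \<le> ln (norm (w - z0) / r)"
      using outside[of w] that \<open>0 < r\<close> by simp
    finally show ?thesis
      unfolding \<Psi>_def using norm_log_barrier_le_1_iff[OF \<open>0 < r\<close> outside] that by simp
  qed
  moreover have "norm (\<Psi> w) \<le> 1" if "0 \<le> g w" "norm z0 + r * exp (k * M) \<le> norm w" for w
  proof -
    have "- (k * Re (H w)) \<le> ln (exp (k * M))"
      using mult_left_mono[OF below[OF that(1)], of k] \<open>0 < k\<close> by simp
    also have "\<dots> \<le> ln (norm (w - z0) / r)"
    proof (rule ln_mono)
      have "r * exp (k * M) \<le> norm (w - z0)"
        using that(2) norm_triangle_ineq2[of w z0] by linarith
      then show "exp (k * M) \<le> norm (w - z0) / r"
        using \<open>0 < r\<close> by (simp add: pos_le_divide_eq mult.commute)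
    qed simp
    finally show ?thesis
      unfolding \<Psi>_def using norm_log_barrier_le_1_iff[OF \<open>0 < r\<close> outside] that by simp
  qed
  ultimately have "norm (\<Psi> z) \<le> 1"
    using maximum_modulus_superlevel_set[OF g, of \<Psi> 1 "norm z0 + r * exp (k * M)"] z by blast
  then show ?thesis
    unfolding \<Psi>_def using norm_log_barrier_le_1_iff[OF \<open>0 < r\<close> outside[OF z]] by simp
qed

lemma Phragmen_Lindelof_Re_nonneg:
  fixes H :: "complex \<Rightarrow> complex" and g :: "complex \<Rightarrow> real"
  assumes H: "H holomorphic_on UNIV" and g: "continuous_on UNIV g" and "g z0 < 0"
    and boundary: "\<And>w. g w = 0 \<Longrightarrow> 0 \<le> Re (H w)"
    and below: "\<And>w. 0 \<le> g w \<Longrightarrow> - M \<le> Re (H w)"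
    and z: "0 \<le> g z"
  shows "0 \<le> Re (H z)"
proof -
  have "open {w. g w < 0}"
    by (intro open_Collect_less continuous_on_const g)
  then obtain r where "0 < r" and r: "ball z0 r \<subseteq> {w. g w < 0}"
    using \<open>g z0 < 0\<close> open_contains_ball by blast
  have outside: "r \<le> norm (w - z0)" if "0 \<le> g w" for w
  proof -
    have "w \<notin> ball z0 r"
      using r that by auto
    then show ?thesis
      by (simp add: dist_norm norm_minus_commute)
  qed
  define L where "L = ln (norm (z - z0) / r)"
  have bound: "- L / k \<le> Re (H z)" if "0 < k" for k
  proof -
    have "- L \<le> Re (H z) * k"
      using Re_log_barrier_bound[OF H g \<open>0 < r\<close> outside boundary below that z]
      by (simp add: L_def mult.commute)
    then show ?thesis
      by (simp only: pos_divide_le_eq[OF that])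
  qed
  have "\<forall>\<^sub>F k in at_top. - L / k \<le> Re (H z)"
    by (rule eventually_mono[OF eventually_gt_at_top[of 0] bound])
  moreover have "((\<lambda>k. - L / k) \<longlongrightarrow> 0) at_top"
    by (intro tendsto_divide_0[OF tendsto_const] filterlim_at_top_imp_at_infinity filterlim_ident)
  ultimately show ?thesis
    using tendsto_upperbound by force
qed

text \<open>Phragmen-Lindelof applies to F + \<epsilon> G + C for every \<epsilon> > 0; then let \<epsilon> \<rightarrow> 0.\<close>
lemma entire_Re_lower_bound_where_Re_nonneg:
  assumes F: "F holomorphic_on UNIV" and G: "G holomorphic_on UNIV" and "Re (G z0) < 0"
    and dominated: "\<And>\<epsilon>. 0 < \<epsilon> \<Longrightarrow> \<exists>C. \<forall>w. - \<epsilon> * \<bar>Re (G w)\<bar> - C \<le> Re (F w)"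
  obtains C where "\<And>z. 0 \<le> Re (G z) \<Longrightarrow> - C \<le> Re (F z)"
proof -
  obtain C where C: "\<And>w. - 1 * \<bar>Re (G w)\<bar> - C \<le> Re (F w)"
    using dominated[of 1] by auto
  have ReG: "continuous_on UNIV (\<lambda>w. Re (G w))"
    using holomorphic_on_imp_continuous_on[OF G] by (intro continuous_intros)
  have approx: "0 \<le> Re (F z) + \<epsilon> * Re (G z) + C" if "0 \<le> Re (G z)" "0 < \<epsilon>" for z \<epsilon>
  proof -
    obtain C\<epsilon> where C\<epsilon>: "\<And>w. - \<epsilon> * \<bar>Re (G w)\<bar> - C\<epsilon> \<le> Re (F w)"
      using dominated[OF \<open>0 < \<epsilon>\<close>] by auto
    have "0 \<le> Re (F z + of_real \<epsilon> * G z + of_real C)"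
    proof (rule Phragmen_Lindelof_Re_nonneg[OF _ ReG \<open>Re (G z0) < 0\<close>,
          where H = "\<lambda>w. F w + of_real \<epsilon> * G w + of_real C" and M = "C\<epsilon> - C"])
      show "(\<lambda>w. F w + of_real \<epsilon> * G w + of_real C) holomorphic_on UNIV"
        using F G by (intro holomorphic_intros)
      show "0 \<le> Re (F w + of_real \<epsilon> * G w + of_real C)" if "Re (G w) = 0" for w
        using C[of w] that by simp
      show "- (C\<epsilon> - C) \<le> Re (F w + of_real \<epsilon> * G w + of_real C)" if "0 \<le> Re (G w)" for w
        using C\<epsilon>[of w] that by simp
    qed (use that in simp)
    then show ?thesis by simp
  qed
  have limit: "0 \<le> Re (F z) + C" if "0 \<le> Re (G z)" for z
  proof (rule tendsto_lowerbound)
    have "((\<lambda>\<epsilon>. Re (F z) + \<epsilon> * Re (G z) + C) \<longlongrightarrow> Re (F z) + 0 * Re (G z) + C) (at_right 0)"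
      by (intro tendsto_intros)
    then show "((\<lambda>\<epsilon>. Re (F z) + \<epsilon> * Re (G z) + C) \<longlongrightarrow> Re (F z) + C) (at_right 0)"
      by simp
    show "\<forall>\<^sub>F \<epsilon> in at_right 0. 0 \<le> Re (F z) + \<epsilon> * Re (G z) + C"
      using eventually_at_right_less[of 0] by (rule eventually_mono) (rule approx[OF that])
  qed simp_all
  have "- C \<le> Re (F z)" if "0 \<le> Re (G z)" for z
    using limit[OF that] by linarith
  then show thesis by (rule that)
qed

lemma entire_Re_bounded_below_if_dominated:
  assumes P: "P holomorphic_on UNIV" and Q: "Q holomorphic_on UNIV"
    and dominated: "\<And>\<epsilon>. 0 < \<epsilon> \<Longrightarrow> \<exists>C. \<forall>z. - \<epsilon> * \<bar>Re (Q z)\<bar> - C \<le> Re (P z)"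
  obtains B where "\<And>z. B \<le> Re (P z)"
proof -
  consider a where "range (\<lambda>z. Re (Q z)) = {a}" | "range (\<lambda>z. Re (Q z)) = UNIV"
    using entire_Re_range[OF Q] by blast
  then show thesis
  proof cases
    case 1
    then have "Re (Q z) = a" for z
      by (metis rangeI singletonD)
    moreover obtain C where "\<And>z. - 1 * \<bar>Re (Q z)\<bar> - C \<le> Re (P z)"
      using dominated[of 1] by auto
    ultimately show thesis
      using that[of "- \<bar>a\<bar> - C"] by simp
  next
    case 2
    then obtain z1 z2 where "Re (Q z1) = -1" "Re (Q z2) = 1"
      by (metis UNIV_I imageE)
    have "Re (Q z1) < 0"
      using \<open>Re (Q z1) = -1\<close> by simp
    then obtain C1 where C1: "\<And>z. 0 \<le> Re (Q z) \<Longrightarrow> - C1 \<le> Re (P z)"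
      using entire_Re_lower_bound_where_Re_nonneg[OF P Q _ dominated] by metis
    have "(\<lambda>z. - Q z) holomorphic_on UNIV"
      using Q by (intro holomorphic_intros)
    moreover have "Re (- Q z2) < 0"
      using \<open>Re (Q z2) = 1\<close> by simp
    moreover have "\<exists>C. \<forall>z. - \<epsilon> * \<bar>Re (- Q z)\<bar> - C \<le> Re (P z)" if "0 < \<epsilon>" for \<epsilon>
      using dominated[OF that] by simp
    ultimately obtain C2 where C2: "\<And>z. 0 \<le> Re (- Q z) \<Longrightarrow> - C2 \<le> Re (P z)"
      using entire_Re_lower_bound_where_Re_nonneg[OF P] by metis
    have "- max C1 C2 \<le> Re (P z)" for z
      using C1[of z] C2[of z] by (cases "0 \<le> Re (Q z)") auto
    then show thesis by (rule that)
  qed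
qed

section \<open>Asymptotic directions\<close>

lemma Re_sgn_le_in_cone:
  fixes z :: complex
  assumes "0 < \<epsilon>" and cone: "Re z < - \<epsilon> * \<bar>Im z\<bar>"
  shows "Re (sgn z) \<le> - \<epsilon> / (1 + \<epsilon>)"
proof -
  have "0 \<le> \<epsilon> * \<bar>Im z\<bar>"
    using \<open>0 < \<epsilon>\<close> by simp
  with cone have "Re z < 0"
    by linarith
  have "0 < - Re z + \<bar>Im z\<bar>" "norm z \<le> - Re z + \<bar>Im z\<bar>" "0 < norm z"
    using \<open>Re z < 0\<close> cmod_le[of z] by auto
  then have "Re z / norm z \<le> Re z / (- Re z + \<bar>Im z\<bar>)"
    using \<open>Re z < 0\<close> by (intro divide_left_mono_neg) auto
  also have "\<dots> \<le> - \<epsilon> / (1 + \<epsilon>)"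
  proof -
    have "Re z * (1 + \<epsilon>) \<le> - \<epsilon> * (- Re z + \<bar>Im z\<bar>)"
      using cone by (simp add: algebra_simps)
    then show ?thesis
      using \<open>0 < - Re z + \<bar>Im z\<bar>\<close> \<open>0 < \<epsilon>\<close> by (simp add: divide_simps)
  qed
  finally show ?thesis
    by (simp add: sgn_eq Re_divide_of_real)
qed

lemma asym_dir_of_unbounded_sequence:
  assumes R: "\<And>n. w n \<in> R" and unbounded: "\<And>n. real n < norm (w n)"
  obtains \<zeta> r
  where "\<zeta> \<in> asym_dirs R" "strict_mono r" "(\<lambda>n. sgn (w (r n))) \<longlonglongrightarrow> \<zeta>"
proof -
  have "w n \<noteq> 0" for n
    using unbounded[of n] by auto
  then have "\<forall>n. sgn (w n) \<in> sphere 0 1"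
    by (simp add: norm_sgn)
  then obtain \<zeta> r where "\<zeta> \<in> sphere 0 1" "strict_mono r"
    and lim: "((\<lambda>n. sgn (w n)) \<circ> r) \<longlonglongrightarrow> \<zeta>"
    by (rule seq_compactE[OF compact_imp_seq_compact[OF compact_sphere]])
  have "filterlim (\<lambda>n. norm (w n)) at_top sequentially"
    using unbounded by (intro filterlim_at_top_mono[OF filterlim_real_sequentially] always_eventually)
      (simp add: less_imp_le)
  then have "(\<lambda>n. 1 / norm (w n)) \<longlonglongrightarrow> 0"
    using tendsto_inverse_0_at_top by (simp add: divide_inverse)
  then have "(\<lambda>n. 1 / norm (w (r n))) \<longlonglongrightarrow> 0"
    using LIMSEQ_subseq_LIMSEQ[OF _ \<open>strict_mono r\<close>] by (auto simp: o_def)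
  moreover have "complex_of_real (1 / norm (w n)) * w n = sgn (w n)" for n
    by (simp add: sgn_eq field_simps)
  ultimately have "\<zeta> \<in> asym_dirs R"
    using \<open>\<zeta> \<in> sphere 0 1\<close> R \<open>\<And>n. w n \<noteq> 0\<close> lim unfolding asym_dirs_def o_def
    by (intro CollectI conjI exI[of _ "\<lambda>n. w (r n)"] exI[of _ "\<lambda>n. 1 / norm (w (r n))"]) auto
  then show thesis
    using that \<open>strict_mono r\<close> lim by (simp add: o_def)
qed

lemma half_circle_Re_rotated_nonneg:
  assumes "\<zeta> \<in> {cis \<theta> | \<theta>. \<alpha> - pi/2 \<le> \<theta> \<and> \<theta> \<le> \<alpha> + pi/2}"
  shows "0 \<le> Re (\<zeta> * cis (- \<alpha>))"
proof -
  obtain \<theta> where "\<zeta> = cis \<theta>" "\<alpha> - pi/2 \<le> \<theta>" "\<theta> \<le> \<alpha> + pi/2"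
    using assms by blast
  then show ?thesis
    by (simp add: cis_mult cos_ge_zero)
qed

text \<open>Points of R violating the bound escape to infinity within a cone around
  - cis \<alpha>, so they produce an asymptotic direction outside the half circle.\<close>
lemma asym_dirs_in_half_circle_imp_lower_bound:
  assumes dirs: "asym_dirs R \<subseteq> {cis \<theta> | \<theta>. \<alpha> - pi/2 \<le> \<theta> \<and> \<theta> \<le> \<alpha> + pi/2}"
    and "0 < \<epsilon>"
  shows "\<exists>C. \<forall>w\<in>R. - \<epsilon> * \<bar>Im (w * cis (- \<alpha>))\<bar> - C \<le> Re (w * cis (- \<alpha>))"
proof (rule ccontr)
  define c where "c = cis (- \<alpha>)"
  assume "\<not> ?thesis"
  then have "\<forall>n::nat. \<exists>w. w \<in> R \<and> Re (w * c) < - \<epsilon> * \<bar>Im (w * c)\<bar> - real n"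
    by (auto simp: c_def not_le)
  then obtain w where R: "\<And>n. w n \<in> R"
    and far: "\<And>n. Re (w n * c) < - \<epsilon> * \<bar>Im (w n * c)\<bar> - real n"
    unfolding choice_iff by blast
  have unbounded: "real n < norm (w n)" for n
  proof -
    have "0 \<le> \<epsilon> * \<bar>Im (w n * c)\<bar>"
      using \<open>0 < \<epsilon>\<close> by simp
    with far[of n] have "real n < \<bar>Re (w n * c)\<bar>"
      by linarith
    also have "\<dots> \<le> norm (w n)"
      using abs_Re_le_cmod[of "w n * c"] by (simp add: c_def norm_mult)
    finally show ?thesis .
  qed
  obtain \<zeta> r where "\<zeta> \<in> asym_dirs R" "strict_mono r"
    and lim: "(\<lambda>n. sgn (w (r n))) \<longlonglongrightarrow> \<zeta>"
    using asym_dir_of_unbounded_sequence[OF R unbounded] by blast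
  have "Re (sgn (w n) * c) \<le> - \<epsilon> / (1 + \<epsilon>)" for n
  proof -
    have "Re (w n * c) < - \<epsilon> * \<bar>Im (w n * c)\<bar>"
      using far[of n] by linarith
    moreover have "sgn (w n * c) = sgn (w n) * c"
      by (simp add: c_def sgn_mult)
    ultimately show ?thesis
      using Re_sgn_le_in_cone[OF \<open>0 < \<epsilon>\<close>] by metis
  qed
  moreover have "(\<lambda>n. Re (sgn (w (r n)) * c)) \<longlonglongrightarrow> Re (\<zeta> * c)"
    by (intro tendsto_intros lim)
  ultimately have "Re (\<zeta> * c) \<le> - \<epsilon> / (1 + \<epsilon>)"
    by (intro LIMSEQ_le_const2) auto
  moreover have "0 \<le> Re (\<zeta> * c)"
    using dirs \<open>\<zeta> \<in> asym_dirs R\<close> half_circle_Re_rotated_nonneg unfolding c_def by blast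
  moreover have "0 < \<epsilon> / (1 + \<epsilon>)"
    using \<open>0 < \<epsilon>\<close> by simp
  ultimately show False
    by linarith
qed

theorem theorem2:
  fixes u v :: "complex \<Rightarrow> real" and \<alpha> :: real
  assumes "harmonic u" and "harmonic v"
    and "asym_dirs (range (\<lambda>z. Complex (u z) (v z)))
           \<subseteq> {cis \<theta> | \<theta>. \<alpha> - pi/2 \<le> \<theta> \<and> \<theta> \<le> \<alpha> + pi/2}"
  shows "(\<exists>c::real. \<forall>z. cos \<alpha> * u z + sin \<alpha> * v z = c) \<and>
         ((\<exists>p. range (\<lambda>z. Complex (u z) (v z)) = {p}) \<or>
          (\<exists>p d. d \<noteq> 0 \<and> range (\<lambda>z. Complex (u z) (v z)) = {p + complex_of_real t * d | t. True}))"
proof -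
  obtain P Q where P: "P holomorphic_on UNIV" and Q: "Q holomorphic_on UNIV"
    and rotated: "\<And>z. Complex (u z) (v z) * cis (- \<alpha>) = Complex (Re (P z)) (Re (Q z))"
    using harmonic_pair_rotation_Re_of_entire[OF assms(1,2)] by blast
  have "\<exists>C. \<forall>z. - \<epsilon> * \<bar>Re (Q z)\<bar> - C \<le> Re (P z)" if "0 < \<epsilon>" for \<epsilon>
  proof -
    obtain C where "\<forall>w\<in>range (\<lambda>z. Complex (u z) (v z)).
        - \<epsilon> * \<bar>Im (w * cis (- \<alpha>))\<bar> - C \<le> Re (w * cis (- \<alpha>))"
      using asym_dirs_in_half_circle_imp_lower_bound[OF assms(3) \<open>0 < \<epsilon>\<close>] by blast
    from bspec[OF this rangeI, unfolded rotated complex.sel] show ?thesis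
      by blast
  qed
  then obtain B where "\<And>z. B \<le> Re (P z)"
    using entire_Re_bounded_below_if_dominated[OF P Q] by blast
  then have "Re (P z) = Re (P 0)" for z
    by (rule entire_Re_bounded_below_imp_constant[OF P])
  then have rotated_const: "Complex (u z) (v z) * cis (- \<alpha>) = Complex (Re (P 0)) (Re (Q z))" for z
    using rotated[of z] by simp
  show ?thesis
  proof
    show "\<exists>c. \<forall>z. cos \<alpha> * u z + sin \<alpha> * v z = c"
      using rotated_const by (intro exI[of _ "Re (P 0)"]) (simp add: complex_eq_iff mult.commute)
    show "(\<exists>p. range (\<lambda>z. Complex (u z) (v z)) = {p}) \<or>
          (\<exists>p d. d \<noteq> 0 \<and> range (\<lambda>z. Complex (u z) (v z)) = {p + complex_of_real t * d | t. True})"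
      using range_rotated_point_or_line[OF rotated_const entire_Re_range[OF Q]] .
  qed
qed

end
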